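(* Let $p$ be a prime, $n$ a positive integer, and $t$ a real number with $1\le t\le p$. For $A\in GL(n,\mathbf{Q}_p)$ let $\|A\|=\max_{j,k}|a_{j,k}|_p$, $r(A)=\max(\|A-I\|,\|A^{-1}-I\|)$ and $r'(A)=\min(r(A),t)$. Then $r'(I)=0$, $r'(A)>0$ for $A\neq I$, $r'(A^{-1})=r'(A)$, and $r'(AB)\le\max(r'(A),r'(B))$ for all $A,B\in GL(n,\mathbf{Q}_p)$. Consequently $r'(B^{-1}A)$ is a left-invariant ultrametric and $r'(AB^{-1})$ a right-invariant ultrametric on $GL(n,\mathbf{Q}_p)$, each determining the standard topology; and for $A,B\in GL(n,\mathbf{Z}_p)$ one has $r'(B^{-1}A)=\|A-B\|$.
   Context: $GL(n,\mathbf{Q}_p)$ is the group of invertible $n\times n$ matrices over $\mathbf{Q}_p$ with topology induced from $M_n(\mathbf{Q}_p)\cong\mathbf{Q}_p^{n^2}$; $GL(n,\mathbf{Z}_p)=\{A\in M_n(\mathbf{Z}_p): |\det A|_p=1\}$. *)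

theory Defs
  imports "HOL-Analysis.Analysis" "HOL-Computational_Algebra.Primes"
begin

definition padic_abs_rat :: "nat \<Rightarrow> rat \<Rightarrow> real" where
  "padic_abs_rat p q =
     (if q = 0 then 0 else
       (case quotient_of q of (a, b) \<Rightarrow>
          real p powi (int (multiplicity (int p) b) - int (multiplicity (int p) a))))"

text \<open>This characterizes Q_p
  up to isometric isomorphism.\<close>
definition is_Qp :: "nat \<Rightarrow> ('a::field_char_0 \<Rightarrow> real) \<Rightarrow> bool" where
  "is_Qp p v \<longleftrightarrow>
     (\<forall>x. 0 \<le> v x) \<and> (\<forall>x. v x = 0 \<longleftrightarrow> x = 0) \<and>
     (\<forall>x y. v (x * y) = v x * v y) \<and>
     (\<forall>x y. v (x + y) \<le> max (v x) (v y)) \<and>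
     (\<forall>q. v (of_rat q) = padic_abs_rat p q) \<and>
     (\<forall>X :: nat \<Rightarrow> 'a. (\<forall>e>0. \<exists>N. \<forall>m\<ge>N. \<forall>k\<ge>N. v (X m - X k) < e) \<longrightarrow>
          (\<exists>L. \<forall>e>0. \<exists>N. \<forall>m\<ge>N. v (X m - L) < e)) \<and>
     (\<forall>x e. e > 0 \<longrightarrow> (\<exists>q. v (x - of_rat q) < e))"

definition mnorm :: "('a \<Rightarrow> real) \<Rightarrow> 'a^'n::finite^'n \<Rightarrow> real" where
  "mnorm v A = Max (range (\<lambda>(j, k). v (A $ j $ k)))"

definition GLn :: "('a::field^'n::finite^'n) set" where
  "GLn = {A. invertible A}"

definition GLZ :: "('a \<Rightarrow> real) \<Rightarrow> ('a::field^'n::finite^'n) set" where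
  "GLZ v = {A. (\<forall>j k. v (A $ j $ k) \<le> 1) \<and> v (det A) = 1}"

definition rr :: "('a \<Rightarrow> real) \<Rightarrow> 'a::field^'n::finite^'n \<Rightarrow> real" where
  "rr v A = max (mnorm v (A - mat 1)) (mnorm v (matrix_inv A - mat 1))"

definition rr' :: "('a \<Rightarrow> real) \<Rightarrow> real \<Rightarrow> 'a::field^'n::finite^'n \<Rightarrow> real" where
  "rr' v t A = min (rr v A) t"

definition ultrametric_on :: "'b set \<Rightarrow> ('b \<Rightarrow> 'b \<Rightarrow> real) \<Rightarrow> bool" where
  "ultrametric_on S d \<longleftrightarrow>
     (\<forall>x\<in>S. \<forall>y\<in>S. 0 \<le> d x y \<and> (d x y = 0 \<longleftrightarrow> x = y) \<and> d x y = d y x) \<and>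
     (\<forall>x\<in>S. \<forall>y\<in>S. \<forall>z\<in>S. d x z \<le> max (d x y) (d y z))"

definition d_open :: "'b set \<Rightarrow> ('b \<Rightarrow> 'b \<Rightarrow> real) \<Rightarrow> 'b set \<Rightarrow> bool" where
  "d_open S d U \<longleftrightarrow> U \<subseteq> S \<and> (\<forall>x\<in>U. \<exists>e>0. \<forall>y\<in>S. d x y < e \<longrightarrow> y \<in> U)"

end

theory Submission
  imports Defs
begin

text \<open>The max-norm is ultrametric and submultiplicative. Since
  \<open>AB - I = (A - I)(B - I) + (A - I) + (B - I)\<close>, this gives \<open>r(AB) \<le> max (r A) (r B)\<close> as long as
  \<open>r A, r B \<le> 1\<close>. The values of \<open>|\<cdot>|\<^sub>p\<close> are powers of \<open>p\<close>, so \<open>r A > 1\<close> forces \<open>r A \<ge> p \<ge> t\<close>,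
  where the truncation makes \<open>r' A = t\<close>; hence \<open>r'(AB) \<le> max (r' A) (r' B)\<close> on the whole
  group, which is exactly what makes \<open>r'(B\<^sup>-\<^sup>1A)\<close> and \<open>r'(AB\<^sup>-\<^sup>1)\<close> ultrametrics. Near \<open>I\<close>, \<open>\<parallel>X - I\<parallel> < 1\<close> forces
  \<open>\<parallel>X\<^sup>-\<^sup>1 - I\<parallel> \<le> \<parallel>X - I\<parallel>\<close>, so \<open>r' X\<close> and \<open>\<parallel>X - I\<parallel>\<close> agree for small values, which makes both
  metrics locally comparable with \<open>\<parallel>A - B\<parallel>\<close>. Finally, matrices \<open>U\<close> with \<open>\<parallel>U\<parallel>, \<parallel>U\<^sup>-\<^sup>1\<parallel> \<le> 1\<close>
  act isometrically on the max-norm, whence \<open>r'(B\<^sup>-\<^sup>1A) = \<parallel>B\<^sup>-\<^sup>1(A - B)\<parallel> = \<parallel>A - B\<parallel>\<close> on \<open>GL(n,\<int>\<^sub>p)\<close>.\<close>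

lemma matrix_diff_ldistrib: "(A::'a::comm_ring_1^'n::finite^'n) ** (B - C) = A ** B - A ** C"
  by (vector matrix_matrix_mult_def sum_subtractf[symmetric] field_simps)

lemma matrix_diff_rdistrib: "((A::'a::comm_ring_1^'n::finite^'n) - B) ** C = A ** C - B ** C"
  by (vector matrix_matrix_mult_def sum_subtractf[symmetric] field_simps)

lemma matrix_inv_right: "invertible (A::'a::field^'n::finite^'n) \<Longrightarrow> A ** matrix_inv A = mat 1"
  unfolding invertible_def matrix_inv_def by (rule someI_ex[THEN conjunct1])

lemma matrix_inv_left: "invertible (A::'a::field^'n::finite^'n) \<Longrightarrow> matrix_inv A ** A = mat 1"
  unfolding invertible_def matrix_inv_def by (rule someI_ex[THEN conjunct2])

lemma matrix_inv_unique:
  assumes "invertible (A::'a::field^'n::finite^'n)" and "A ** X = mat 1"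
  shows "matrix_inv A = X"
proof -
  have "matrix_inv A = matrix_inv A ** (A ** X)" using assms by simp
  also have "\<dots> = X" using matrix_inv_left[OF assms(1)] by (simp add: matrix_mul_assoc)
  finally show ?thesis .
qed

lemma invertible_matrix_inv: "invertible (A::'a::field^'n::finite^'n) \<Longrightarrow> invertible (matrix_inv A)"
  using matrix_inv_left matrix_inv_right invertible_def by blast

lemma matrix_inv_matrix_inv: "invertible (A::'a::field^'n::finite^'n) \<Longrightarrow> matrix_inv (matrix_inv A) = A"
  by (intro matrix_inv_unique invertible_matrix_inv matrix_inv_left)

lemma matrix_inv_mult:
  fixes A B :: "'a::field^'n::finite^'n"
  assumes "invertible A" and "invertible B"
  shows "matrix_inv (A ** B) = matrix_inv B ** matrix_inv A"
proof (rule matrix_inv_unique)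
  show "invertible (A ** B)" using assms by (rule invertible_mult)
  have "A ** B ** (matrix_inv B ** matrix_inv A) = A ** (B ** matrix_inv B) ** matrix_inv A"
    by (simp add: matrix_mul_assoc)
  then show "A ** B ** (matrix_inv B ** matrix_inv A) = mat 1"
    using assms by (simp add: matrix_inv_right)
qed

lemma matrix_inv_mat1: "matrix_inv (mat 1 :: 'a::field^'n::finite^'n) = mat 1"
  by (rule matrix_inv_unique) (auto simp: invertible_def)

lemma matrix_inv_mult_eq_mat1_iff:
  fixes A B :: "'a::field^'n::finite^'n"
  assumes "invertible A" and "invertible B"
  shows "matrix_inv B ** A = mat 1 \<longleftrightarrow> A = B"
proof
  assume "matrix_inv B ** A = mat 1"
  have "A = (B ** matrix_inv B) ** A" using assms(2) by (simp add: matrix_inv_right)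
  also have "\<dots> = B" using \<open>matrix_inv B ** A = mat 1\<close> by (simp flip: matrix_mul_assoc)
  finally show "A = B" .
qed (simp add: matrix_inv_left assms)

lemma mult_matrix_inv_eq_mat1_iff:
  fixes A B :: "'a::field^'n::finite^'n"
  assumes "invertible A" and "invertible B"
  shows "A ** matrix_inv B = mat 1 \<longleftrightarrow> A = B"
proof
  assume "A ** matrix_inv B = mat 1"
  have "A = A ** (matrix_inv B ** B)" using assms(2) by (simp add: matrix_inv_left)
  also have "\<dots> = B" using \<open>A ** matrix_inv B = mat 1\<close> by (simp add: matrix_mul_assoc)
  finally show "A = B" .
qed (simp add: matrix_inv_right assms)

lemma matrix_inv_mult_cancel_left:
  fixes A B C :: "'a::field^'n::finite^'n"
  assumes "invertible B" and "invertible C"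
  shows "matrix_inv (C ** B) ** (C ** A) = matrix_inv B ** A"
proof -
  have "matrix_inv (C ** B) ** (C ** A) = matrix_inv B ** (matrix_inv C ** C) ** A"
    using assms by (simp add: matrix_inv_mult matrix_mul_assoc)
  then show ?thesis using assms(2) by (simp add: matrix_inv_left)
qed

lemma matrix_inv_mult_cancel_right:
  fixes A B C :: "'a::field^'n::finite^'n"
  assumes "invertible B" and "invertible C"
  shows "(A ** C) ** matrix_inv (B ** C) = A ** matrix_inv B"
proof -
  have "(A ** C) ** matrix_inv (B ** C) = A ** (C ** matrix_inv C) ** matrix_inv B"
    using assms by (simp add: matrix_inv_mult matrix_mul_assoc)
  then show ?thesis using assms(2) by (simp add: matrix_inv_right)
qed

section \<open>Ultrametrics from a norm on the general linear group\<close>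

locale GL_ultranorm =
  fixes N :: "'a::field^'n::finite^'n \<Rightarrow> real"
  assumes nonneg: "0 \<le> N A"
    and zero_iff: "A \<in> GLn \<Longrightarrow> N A = 0 \<longleftrightarrow> A = mat 1"
    and inverse: "A \<in> GLn \<Longrightarrow> N (matrix_inv A) = N A"
    and mult: "A \<in> GLn \<Longrightarrow> B \<in> GLn \<Longrightarrow> N (A ** B) \<le> max (N A) (N B)"
begin

lemma ultrametric_left: "ultrametric_on GLn (\<lambda>A B. N (matrix_inv B ** A))"
  unfolding ultrametric_on_def
proof (intro conjI ballI)
  fix A B :: "'a^'n^'n" assume "A \<in> GLn" and "B \<in> GLn"
  then have A: "invertible A" and B: "invertible B" by (auto simp: GLn_def)
  then have quot: "matrix_inv B ** A \<in> GLn"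
    by (auto simp: GLn_def intro: invertible_mult invertible_matrix_inv)
  show "0 \<le> N (matrix_inv B ** A)" by (rule nonneg)
  show "N (matrix_inv B ** A) = 0 \<longleftrightarrow> A = B"
    using zero_iff[OF quot] matrix_inv_mult_eq_mat1_iff[OF A B] by simp
  show "N (matrix_inv B ** A) = N (matrix_inv A ** B)"
    using inverse[OF quot] A B by (simp add: matrix_inv_mult invertible_matrix_inv matrix_inv_matrix_inv)
next
  fix A B C :: "'a^'n^'n" assume "A \<in> GLn" and "B \<in> GLn" and "C \<in> GLn"
  then have invs: "invertible A" "invertible B" "invertible C" by (auto simp: GLn_def)
  then have quot: "matrix_inv B ** A \<in> GLn" "matrix_inv C ** B \<in> GLn"
    by (auto simp: GLn_def intro: invertible_mult invertible_matrix_inv)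
  have "matrix_inv C ** A = (matrix_inv C ** B) ** (matrix_inv B ** A)"
    using invs by (simp add: matrix_mul_assoc) (simp add: matrix_inv_right flip: matrix_mul_assoc)
  then show "N (matrix_inv C ** A) \<le> max (N (matrix_inv B ** A)) (N (matrix_inv C ** B))"
    using mult[OF quot(2,1)] by (simp add: max.commute)
qed

lemma ultrametric_right: "ultrametric_on GLn (\<lambda>A B. N (A ** matrix_inv B))"
  unfolding ultrametric_on_def
proof (intro conjI ballI)
  fix A B :: "'a^'n^'n" assume "A \<in> GLn" and "B \<in> GLn"
  then have A: "invertible A" and B: "invertible B" by (auto simp: GLn_def)
  then have quot: "A ** matrix_inv B \<in> GLn"
    by (auto simp: GLn_def intro: invertible_mult invertible_matrix_inv)
  show "0 \<le> N (A ** matrix_inv B)" by (rule nonneg)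
  show "N (A ** matrix_inv B) = 0 \<longleftrightarrow> A = B"
    using zero_iff[OF quot] mult_matrix_inv_eq_mat1_iff[OF A B] by simp
  show "N (A ** matrix_inv B) = N (B ** matrix_inv A)"
    using inverse[OF quot] A B by (simp add: matrix_inv_mult invertible_matrix_inv matrix_inv_matrix_inv)
next
  fix A B C :: "'a^'n^'n" assume "A \<in> GLn" and "B \<in> GLn" and "C \<in> GLn"
  then have invs: "invertible A" "invertible B" "invertible C" by (auto simp: GLn_def)
  then have quot: "A ** matrix_inv B \<in> GLn" "B ** matrix_inv C \<in> GLn"
    by (auto simp: GLn_def intro: invertible_mult invertible_matrix_inv)
  have "A ** matrix_inv C = (A ** matrix_inv B) ** (B ** matrix_inv C)"
    using invs by (simp add: matrix_mul_assoc) (simp add: matrix_inv_left flip: matrix_mul_assoc)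
  then show "N (A ** matrix_inv C) \<le> max (N (A ** matrix_inv B)) (N (B ** matrix_inv C))"
    using mult[OF quot] by simp
qed

end

lemma d_open_cong:
  assumes "\<forall>x\<in>S. \<forall>e>0. \<exists>d>0. \<forall>y\<in>S. d2 x y < d \<longrightarrow> d1 x y < e"
    and "\<forall>x\<in>S. \<forall>e>0. \<exists>d>0. \<forall>y\<in>S. d1 x y < d \<longrightarrow> d2 x y < e"
  shows "d_open S d1 U \<longleftrightarrow> d_open S d2 U"
proof -
  have "d_open S \<sigma> U"
    if open_\<rho>: "d_open S \<rho> U" and finer: "\<forall>x\<in>S. \<forall>e>0. \<exists>d>0. \<forall>y\<in>S. \<sigma> x y < d \<longrightarrow> \<rho> x y < e"
    for \<rho> \<sigma> :: "'a \<Rightarrow> 'a \<Rightarrow> real"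
    unfolding d_open_def
  proof (intro conjI ballI)
    show "U \<subseteq> S" using open_\<rho> by (simp add: d_open_def)
    fix x assume "x \<in> U"
    then obtain e where "e > 0" "\<forall>y\<in>S. \<rho> x y < e \<longrightarrow> y \<in> U"
      using open_\<rho> unfolding d_open_def by blast
    with finer \<open>x \<in> U\<close> \<open>U \<subseteq> S\<close> show "\<exists>e>0. \<forall>y\<in>S. \<sigma> x y < e \<longrightarrow> y \<in> U" by blast
  qed
  with assms show ?thesis by blast
qed

section \<open>Non-archimedean absolute values and the max-norm\<close>

locale nonarch_abs =
  fixes v :: "'a::field \<Rightarrow> real"
  assumes nonneg: "0 \<le> v x"
    and zero_iff: "v x = 0 \<longleftrightarrow> x = 0"
    and mult: "v (x * y) = v x * v y"
    and add_le_max: "v (x + y) \<le> max (v x) (v y)"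
begin

lemma zero [simp]: "v 0 = 0"
  using zero_iff by simp

lemma one [simp]: "v 1 = 1"
  using mult[of 1 1] zero_iff[of 1] by simp

lemma minus_one: "v (-1) = 1"
proof -
  have "(v (-1))\<^sup>2 = 1" using mult[of "-1" "-1"] by (simp add: power2_eq_square)
  then have "v (-1) = 1 \<or> v (-1) = -1" by (simp add: power2_eq_1_iff)
  then show ?thesis using nonneg[of "-1"] by linarith
qed

lemma uminus [simp]: "v (- x) = v x"
  using mult[of "-1" x] minus_one by simp

lemma diff_commute: "v (x - y) = v (y - x)"
  using uminus[of "x - y"] by simp

lemma diff_le_max: "v (x - y) \<le> max (v x) (v y)"
  using add_le_max[of x "- y"] by simp

lemma eq_if_diff_less:
  assumes "v (x - y) < v x"
  shows "v y = v x"
proof -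
  have "v x \<le> max (v y) (v (x - y))" using add_le_max[of y "x - y"] by simp
  moreover have "v y \<le> max (v x) (v (x - y))" using diff_le_max[of x "x - y"] by simp
  ultimately show ?thesis using assms by linarith
qed

lemma sum_le:
  assumes "finite S" and "\<And>i. i \<in> S \<Longrightarrow> v (f i) \<le> c" and "0 \<le> c"
  shows "v (sum f S) \<le> c"
  using assms by (induction S rule: finite_induct) (auto intro: order_trans[OF add_le_max])

lemma prod: "finite S \<Longrightarrow> v (prod f S) = (\<Prod>i\<in>S. v (f i))"
  by (induction S rule: finite_induct) (auto simp: mult)

lemma mnorm_ge: "v (A $ j $ k) \<le> mnorm v A"
  unfolding mnorm_def by (rule Max_ge) auto

lemma mnorm_le: "(\<And>j k. v (A $ j $ k) \<le> c) \<Longrightarrow> mnorm v A \<le> c"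
  unfolding mnorm_def by (subst Max_le_iff) auto

lemma mnorm_attained: "\<exists>j k. mnorm v A = v (A $ j $ k)"
proof -
  have "mnorm v A \<in> range (\<lambda>(j, k). v (A $ j $ k))"
    unfolding mnorm_def by (rule Max_in) auto
  then show ?thesis by auto
qed

lemma mnorm_nonneg: "0 \<le> mnorm v A"
  using mnorm_ge[of A] nonneg order_trans by blast

lemma mnorm_eq_0_iff: "mnorm v A = 0 \<longleftrightarrow> A = 0"
proof
  assume "mnorm v A = 0"
  then have "v (A $ j $ k) = 0" for j k using mnorm_ge[of A j k] nonneg by (metis order_antisym)
  then show "A = 0" by (simp add: zero_iff vec_eq_iff)
qed (use mnorm_nonneg[of 0] in \<open>auto intro!: order_antisym mnorm_le\<close>)

lemma mnorm_diff_commute: "mnorm v (A - B) = mnorm v (B - A)"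
  unfolding mnorm_def by (simp add: diff_commute)

lemma mnorm_add_le_max: "mnorm v (A + B) \<le> max (mnorm v A) (mnorm v B)"
proof (rule mnorm_le)
  fix j k
  have "v ((A + B) $ j $ k) \<le> max (v (A $ j $ k)) (v (B $ j $ k))" by (simp add: add_le_max)
  also have "\<dots> \<le> max (mnorm v A) (mnorm v B)" by (intro max.mono mnorm_ge)
  finally show "v ((A + B) $ j $ k) \<le> max (mnorm v A) (mnorm v B)" .
qed

lemma mnorm_mult_le: "mnorm v (A ** B) \<le> mnorm v A * mnorm v B"
proof (rule mnorm_le)
  fix j k
  have "v (A $ j $ l * B $ l $ k) \<le> mnorm v A * mnorm v B" for l
    unfolding mult by (intro mult_mono mnorm_ge mnorm_nonneg nonneg)
  then show "v ((A ** B) $ j $ k) \<le> mnorm v A * mnorm v B"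
    unfolding matrix_matrix_mult_def by (simp add: sum_le mnorm_nonneg)
qed

lemma mnorm_mult_le_mult:
  assumes "mnorm v A \<le> a" and "mnorm v B \<le> b"
  shows "mnorm v (A ** B) \<le> a * b"
  using mnorm_mult_le[of A B] mult_mono[OF assms order_trans[OF mnorm_nonneg assms(1)] mnorm_nonneg]
  by linarith

lemma mnorm_mat1_le: "mnorm v (mat 1 :: 'a^'n::finite^'n) \<le> 1"
  by (rule mnorm_le) (simp add: mat_def)

lemma mnorm_matrix_inv_sub_mat1_le:
  fixes X :: "'a^'n::finite^'n"
  assumes X: "invertible X" and small: "mnorm v (X - mat 1) < 1"
  shows "mnorm v (matrix_inv X - mat 1) \<le> mnorm v (X - mat 1)"
proof -
  let ?Y = "matrix_inv X" and ?m = "mnorm v (X - mat 1)"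
  have Y_sub: "?Y - mat 1 = ?Y ** (mat 1 - X)"
    by (simp add: matrix_diff_ldistrib matrix_inv_left[OF X])
  have bound: "mnorm v (?Y - mat 1) \<le> mnorm v ?Y * ?m"
    using mnorm_mult_le[of ?Y "mat 1 - X"] by (simp add: Y_sub mnorm_diff_commute)
  have "mnorm v ?Y \<le> max (mnorm v (mat 1 :: 'a^'n^'n)) (mnorm v (?Y - mat 1))"
    using mnorm_add_le_max[of "mat 1" "?Y - mat 1"] by simp
  also have "\<dots> \<le> max 1 (mnorm v ?Y * ?m)"
    using mnorm_mat1_le bound by (rule max.mono)
  finally have Y_le: "mnorm v ?Y \<le> max 1 (mnorm v ?Y * ?m)" .
  have Y_le_1: "mnorm v ?Y \<le> 1"
  proof (rule ccontr)
    assume "\<not> mnorm v ?Y \<le> 1"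
    then have "mnorm v ?Y * ?m < mnorm v ?Y * 1" using small by (intro mult_strict_left_mono) auto
    with Y_le \<open>\<not> mnorm v ?Y \<le> 1\<close> show False by (simp add: max_def split: if_splits)
  qed
  have "mnorm v ?Y * ?m \<le> 1 * ?m" by (rule mult_right_mono[OF Y_le_1 mnorm_nonneg])
  with bound show ?thesis by simp
qed

lemma mnorm_mult_sub_mat1_le:
  fixes X Y :: "'a^'n::finite^'n"
  assumes "mnorm v (X - mat 1) \<le> 1" and "mnorm v (Y - mat 1) \<le> 1"
  shows "mnorm v (X ** Y - mat 1) \<le> max (mnorm v (X - mat 1)) (mnorm v (Y - mat 1))"
proof -
  let ?a = "mnorm v (X - mat 1)" and ?b = "mnorm v (Y - mat 1)"
  let ?P = "(X - mat 1) ** (Y - mat 1)"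
  have P: "mnorm v ?P \<le> ?b"
    using mnorm_mult_le_mult[OF assms(1) order_refl, of "Y - mat 1"] by simp
  have expand: "X ** Y - mat 1 = ?P + (X - mat 1) + (Y - mat 1)"
    by (simp add: matrix_diff_ldistrib matrix_diff_rdistrib algebra_simps)
  have "mnorm v (X ** Y - mat 1) \<le> max (mnorm v (?P + (X - mat 1))) ?b"
    unfolding expand by (rule mnorm_add_le_max)
  also have "\<dots> \<le> max (max (mnorm v ?P) ?a) ?b"
    by (intro max.mono mnorm_add_le_max order_refl)
  also have "\<dots> \<le> max ?a ?b" using P by linarith
  finally show ?thesis .
qed

lemma mnorm_unimodular_mult:
  assumes "invertible U" and "mnorm v U \<le> 1" and "mnorm v (matrix_inv U) \<le> 1"
  shows "mnorm v (U ** M) = mnorm v M"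
proof (rule order_antisym)
  show "mnorm v (U ** M) \<le> mnorm v M"
    using mnorm_mult_le_mult[OF assms(2) order_refl, of M] by simp
  have "M = matrix_inv U ** (U ** M)"
    using assms(1) by (simp add: matrix_inv_left matrix_mul_assoc)
  then show "mnorm v M \<le> mnorm v (U ** M)"
    using mnorm_mult_le_mult[OF assms(3) order_refl, of "U ** M"] by simp
qed

lemma rr_nonneg: "0 \<le> rr v A"
  unfolding rr_def by (simp add: max.coboundedI1 mnorm_nonneg)

lemma rr_eq_0_iff: "rr v A = 0 \<longleftrightarrow> A = mat 1"
proof
  assume "rr v A = 0"
  then have "mnorm v (A - mat 1) \<le> 0" unfolding rr_def by (metis max.cobounded1)
  then show "A = mat 1" using mnorm_nonneg[of "A - mat 1"] by (simp add: mnorm_eq_0_iff)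
qed (simp add: rr_def matrix_inv_mat1 mnorm_eq_0_iff)

lemma rr_matrix_inv: "invertible A \<Longrightarrow> rr v (matrix_inv A) = rr v A"
  unfolding rr_def by (simp add: matrix_inv_matrix_inv max.commute)

lemma rr_less_iff:
  assumes "invertible X" and "e \<le> 1"
  shows "rr v X < e \<longleftrightarrow> mnorm v (X - mat 1) < e"
  using mnorm_matrix_inv_sub_mat1_le[OF assms(1)] assms(2) unfolding rr_def by force

lemma rr_mult_le_max:
  assumes "invertible A" and "invertible B" and "rr v A \<le> 1" and "rr v B \<le> 1"
  shows "rr v (A ** B) \<le> max (rr v A) (rr v B)"
proof -
  have A: "mnorm v (A - mat 1) \<le> rr v A" "mnorm v (matrix_inv A - mat 1) \<le> rr v A"
    and B: "mnorm v (B - mat 1) \<le> rr v B" "mnorm v (matrix_inv B - mat 1) \<le> rr v B"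
    by (simp_all add: rr_def)
  have "mnorm v (A ** B - mat 1) \<le> max (mnorm v (A - mat 1)) (mnorm v (B - mat 1))"
    using A B assms(3,4) by (intro mnorm_mult_sub_mat1_le) auto
  also have "\<dots> \<le> max (rr v A) (rr v B)" using A B by (intro max.mono)
  finally have fwd: "mnorm v (A ** B - mat 1) \<le> max (rr v A) (rr v B)" .
  have "mnorm v (matrix_inv B ** matrix_inv A - mat 1)
      \<le> max (mnorm v (matrix_inv B - mat 1)) (mnorm v (matrix_inv A - mat 1))"
    using A B assms(3,4) by (intro mnorm_mult_sub_mat1_le) auto
  also have "\<dots> \<le> max (rr v A) (rr v B)" using max.mono[OF B(2) A(2)] by (simp add: max.commute)
  finally show ?thesis
    using fwd unfolding rr_def[of v "A ** B"] matrix_inv_mult[OF assms(1,2)] by simp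
qed

lemma det_le_1:
  fixes M :: "'a^'n::finite^'n"
  assumes "\<And>i j. v (M $ i $ j) \<le> 1"
  shows "v (det M) \<le> 1"
  unfolding det_def
  by (intro sum_le) (auto simp: mult prod sign_def minus_one assms intro!: prod_le_1 nonneg)

lemma GLZ_invertible_mnorm_le_1:
  assumes "B \<in> GLZ v"
  shows "invertible B" and "mnorm v B \<le> 1" and "mnorm v (matrix_inv B) \<le> 1"
proof -
  have entries: "v (B $ j $ k) \<le> 1" for j k
    using assms by (simp add: GLZ_def)
  have det: "v (det B) = 1"
    using assms by (simp add: GLZ_def)
  have det_nz: "det B \<noteq> 0" using det zero_iff by force
  then show inv: "invertible B" by (simp add: invertible_det_nz)
  show "mnorm v B \<le> 1" using entries by (rule mnorm_le)
  show "mnorm v (matrix_inv B) \<le> 1"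
  proof (rule mnorm_le)
    fix k j
    let ?M = "\<chi> i l. if l = k then axis j 1 $ i else B $ i $ l"
    have "B *v (matrix_inv B *v axis j 1) = axis j 1"
      by (simp add: matrix_vector_mul_assoc matrix_inv_right inv)
    then have "matrix_inv B *v axis j 1 = (\<chi> k. det (\<chi> i l. if l = k then axis j 1 $ i else B $ i $ l) / det B)"
      using cramer[OF det_nz] by blast
    moreover have "(matrix_inv B *v axis j 1) $ k = matrix_inv B $ k $ j"
      by (simp add: matrix_vector_mult_def axis_def if_distrib sum.delta cong: if_cong)
    ultimately have "matrix_inv B $ k $ j = det ?M / det B" by simp
    moreover have "v (det ?M) \<le> 1" by (intro det_le_1) (auto simp: entries axis_def)
    ultimately show "v (matrix_inv B $ k $ j) \<le> 1"
      using det mult[of "det ?M / det B" "det B"] det_nz by simp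
  qed
qed

lemma rr_GLZ:
  assumes "A \<in> GLZ v" and "B \<in> GLZ v"
  shows "rr v (matrix_inv B ** A) = mnorm v (A - B)"
proof -
  note A = GLZ_invertible_mnorm_le_1[OF assms(1)] and B = GLZ_invertible_mnorm_le_1[OF assms(2)]
  have "matrix_inv B ** A - mat 1 = matrix_inv B ** (A - B)"
    using B(1) by (simp add: matrix_diff_ldistrib matrix_inv_left)
  then have "mnorm v (matrix_inv B ** A - mat 1) = mnorm v (A - B)"
    using mnorm_unimodular_mult[OF invertible_matrix_inv[OF B(1)] B(3)] B
    by (simp add: matrix_inv_matrix_inv)
  moreover have "matrix_inv A ** B - mat 1 = matrix_inv A ** (B - A)"
    using A(1) by (simp add: matrix_diff_ldistrib matrix_inv_left)
  then have "mnorm v (matrix_inv A ** B - mat 1) = mnorm v (A - B)"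
    using mnorm_unimodular_mult[OF invertible_matrix_inv[OF A(1)] A(3)] A
    by (simp add: matrix_inv_matrix_inv mnorm_diff_commute)
  ultimately show ?thesis
    unfolding rr_def using A(1) B(1)
    by (simp add: matrix_inv_mult invertible_matrix_inv matrix_inv_matrix_inv)
qed

end

section \<open>The truncated function \<open>r'\<close>\<close>

text \<open>The gap in the value set of \<open>v\<close> is the only place where \<open>v = |\<cdot>|\<^sub>p\<close> and \<open>t \<le> p\<close> enter.\<close>

locale gapped_abs = nonarch_abs v for v :: "'a::field \<Rightarrow> real" +
  fixes t :: real
  assumes t_ge_1: "1 \<le> t"
    and gap: "1 < v x \<Longrightarrow> t \<le> v x"
begin

lemma rr'_eq_t_if_rr_gt_1:
  assumes "1 < rr v A"
  shows "rr' v t A = t"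
proof -
  have "1 < mnorm v M \<Longrightarrow> t \<le> mnorm v M" for M :: "'a^'n^'n"
    using mnorm_attained[of M] gap by metis
  then have "t \<le> rr v A" using assms unfolding rr_def by (auto simp: max_def split: if_splits)
  then show ?thesis unfolding rr'_def by simp
qed

lemma rr'_nonneg: "0 \<le> rr' v t A"
  unfolding rr'_def using rr_nonneg t_ge_1 by simp

lemma rr'_eq_0_iff: "rr' v t A = 0 \<longleftrightarrow> A = mat 1"
  unfolding rr'_def using rr_eq_0_iff[of A] rr_nonneg[of A] t_ge_1 by (auto simp: min_def)

lemma rr'_matrix_inv: "invertible A \<Longrightarrow> rr' v t (matrix_inv A) = rr' v t A"
  unfolding rr'_def by (simp add: rr_matrix_inv)

lemma rr'_GLZ:
  assumes "A \<in> GLZ v" and "B \<in> GLZ v"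
  shows "rr' v t (matrix_inv B ** A) = mnorm v (A - B)"
proof -
  have "mnorm v (A - B) \<le> 1"
  proof (rule mnorm_le)
    fix j k
    have "v ((A - B) $ j $ k) \<le> max (v (A $ j $ k)) (v (B $ j $ k))" by (simp add: diff_le_max)
    moreover have "v (A $ j $ k) \<le> 1" and "v (B $ j $ k) \<le> 1" using assms by (simp_all add: GLZ_def)
    ultimately show "v ((A - B) $ j $ k) \<le> 1" by simp
  qed
  then show ?thesis using rr_GLZ[OF assms] t_ge_1 unfolding rr'_def by simp
qed

lemma rr'_mult_le_max:
  assumes "invertible A" and "invertible B"
  shows "rr' v t (A ** B) \<le> max (rr' v t A) (rr' v t B)"
proof (cases "rr v A \<le> 1 \<and> rr v B \<le> 1")
  case True
  then show ?thesis
    using rr_mult_le_max[OF assms] unfolding rr'_def by (auto simp: min_def max_def)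
next
  case False
  then have "rr' v t A = t \<or> rr' v t B = t" using rr'_eq_t_if_rr_gt_1 by force
  moreover have "rr' v t (A ** B) \<le> t" unfolding rr'_def by simp
  ultimately show ?thesis by linarith
qed

lemma GL_ultranorm_rr': "GL_ultranorm (rr' v t)"
  by unfold_locales (auto simp: GLn_def rr'_nonneg rr'_eq_0_iff rr'_matrix_inv rr'_mult_le_max)

lemma rr'_less_iff:
  assumes "invertible X" and "e \<le> 1"
  shows "rr' v t X < e \<longleftrightarrow> mnorm v (X - mat 1) < e"
  using rr_less_iff[OF assms] assms(2) t_ge_1 unfolding rr'_def by auto

text \<open>\<open>f A B\<close> plays the role of \<open>A\<^sup>-\<^sup>1B\<close> or \<open>BA\<^sup>-\<^sup>1\<close>: \<open>f A B - I\<close> differs from \<open>B - A\<close> by a factor \<open>A\<^sup>\<plusminus>\<^sup>1\<close>.\<close>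

lemma d_open_iff_mnorm_open:
  fixes f :: "'a^'n::finite^'n \<Rightarrow> 'a^'n^'n \<Rightarrow> 'a^'n^'n"
  assumes dist: "\<And>A B. A \<in> GLn \<Longrightarrow> B \<in> GLn \<Longrightarrow> d A B = rr' v t (f A B)"
    and inv: "\<And>A B. A \<in> GLn \<Longrightarrow> B \<in> GLn \<Longrightarrow> invertible (f A B)"
    and comparable: "\<And>A. A \<in> GLn \<Longrightarrow> \<exists>c>0. \<forall>B.
        mnorm v (f A B - mat 1) \<le> c * mnorm v (B - A) \<and> mnorm v (B - A) \<le> c * mnorm v (f A B - mat 1)"
  shows "d_open GLn d U \<longleftrightarrow> d_open GLn (\<lambda>A B. mnorm v (A - B)) U"
proof (rule d_open_cong; intro ballI allI impI)
  fix A :: "'a^'n::finite^'n" and e :: real assume A: "A \<in> GLn" and e: "0 < e"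
  obtain c where c: "0 < c" and upper: "\<And>B. mnorm v (f A B - mat 1) \<le> c * mnorm v (A - B)"
    and lower: "\<And>B. mnorm v (A - B) \<le> c * mnorm v (f A B - mat 1)"
    using comparable[OF A] by (metis mnorm_diff_commute)
  show "\<exists>\<delta>>0. \<forall>B\<in>GLn. mnorm v (A - B) < \<delta> \<longrightarrow> d A B < e"
  proof (intro exI conjI ballI impI)
    show "0 < min 1 e / c" using e c by simp
    fix B assume B: "B \<in> GLn" and close: "mnorm v (A - B) < min 1 e / c"
    have "mnorm v (f A B - mat 1) < min 1 e"
      using upper[of B] close c by (simp add: pos_less_divide_eq mult.commute)
    then show "d A B < e" using rr'_less_iff[OF inv[OF A B], of "min 1 e"] dist[OF A B] by simp
  qed
  show "\<exists>\<delta>>0. \<forall>B\<in>GLn. d A B < \<delta> \<longrightarrow> mnorm v (A - B) < e"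
  proof (intro exI conjI ballI impI)
    show "0 < min 1 (e / c)" using e c by simp
    fix B assume B: "B \<in> GLn" and close: "d A B < min 1 (e / c)"
    then have "mnorm v (f A B - mat 1) < min 1 (e / c)"
      using rr'_less_iff[OF inv[OF A B], of "min 1 (e / c)"] dist[OF A B] by simp
    then show "mnorm v (A - B) < e"
      using lower[of B] c by (simp add: pos_less_divide_eq mult.commute)
  qed
qed

lemma d_open_left_iff:
  "d_open GLn (\<lambda>A B. rr' v t (matrix_inv B ** A)) U \<longleftrightarrow> d_open GLn (\<lambda>A B. mnorm v (A - B)) U"
proof (rule d_open_iff_mnorm_open[where f = "\<lambda>A B. matrix_inv A ** B"])
  fix A B :: "'a^'n^'n" assume "A \<in> GLn" and "B \<in> GLn"
  then show "rr' v t (matrix_inv B ** A) = rr' v t (matrix_inv A ** B)"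
    using GL_ultranorm.ultrametric_left[OF GL_ultranorm_rr'] unfolding ultrametric_on_def by blast
  show "invertible (matrix_inv A ** B)"
    using \<open>A \<in> GLn\<close> \<open>B \<in> GLn\<close> by (simp add: GLn_def invertible_mult invertible_matrix_inv)
next
  fix A :: "'a^'n^'n" assume "A \<in> GLn"
  then have A: "invertible A" by (simp add: GLn_def)
  define c where "c = 1 + mnorm v A + mnorm v (matrix_inv A)"
  have c: "0 < c" "mnorm v A \<le> c" "mnorm v (matrix_inv A) \<le> c"
    using mnorm_nonneg[of A] mnorm_nonneg[of "matrix_inv A"] by (auto simp: c_def)
  have "matrix_inv A ** B - mat 1 = matrix_inv A ** (B - A)" for B
    using A by (simp add: matrix_diff_ldistrib matrix_inv_left)
  moreover have "B - A = A ** (matrix_inv A ** B - mat 1)" for B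
    using A by (simp add: matrix_diff_ldistrib matrix_mul_assoc matrix_inv_right)
  ultimately show "\<exists>c>0. \<forall>B. mnorm v (matrix_inv A ** B - mat 1) \<le> c * mnorm v (B - A)
      \<and> mnorm v (B - A) \<le> c * mnorm v (matrix_inv A ** B - mat 1)"
    using c mnorm_mult_le_mult[OF c(3) order_refl] mnorm_mult_le_mult[OF c(2) order_refl] by metis
qed

lemma d_open_right_iff:
  "d_open GLn (\<lambda>A B. rr' v t (A ** matrix_inv B)) U \<longleftrightarrow> d_open GLn (\<lambda>A B. mnorm v (A - B)) U"
proof (rule d_open_iff_mnorm_open[where f = "\<lambda>A B. B ** matrix_inv A"])
  fix A B :: "'a^'n^'n" assume "A \<in> GLn" and "B \<in> GLn"
  then show "rr' v t (A ** matrix_inv B) = rr' v t (B ** matrix_inv A)"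
    using GL_ultranorm.ultrametric_right[OF GL_ultranorm_rr'] unfolding ultrametric_on_def by blast
  show "invertible (B ** matrix_inv A)"
    using \<open>A \<in> GLn\<close> \<open>B \<in> GLn\<close> by (simp add: GLn_def invertible_mult invertible_matrix_inv)
next
  fix A :: "'a^'n^'n" assume "A \<in> GLn"
  then have A: "invertible A" by (simp add: GLn_def)
  define c where "c = 1 + mnorm v A + mnorm v (matrix_inv A)"
  have c: "0 < c" "mnorm v A \<le> c" "mnorm v (matrix_inv A) \<le> c"
    using mnorm_nonneg[of A] mnorm_nonneg[of "matrix_inv A"] by (auto simp: c_def)
  have "B ** matrix_inv A - mat 1 = (B - A) ** matrix_inv A" for B
    using A by (simp add: matrix_diff_rdistrib matrix_inv_right)
  moreover have "B - A = (B ** matrix_inv A - mat 1) ** A" for B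
    using A by (simp add: matrix_diff_rdistrib matrix_inv_left flip: matrix_mul_assoc)
  ultimately show "\<exists>c>0. \<forall>B. mnorm v (B ** matrix_inv A - mat 1) \<le> c * mnorm v (B - A)
      \<and> mnorm v (B - A) \<le> c * mnorm v (B ** matrix_inv A - mat 1)"
    using c mnorm_mult_le_mult[OF order_refl c(3)] mnorm_mult_le_mult[OF order_refl c(2)]
    by (metis mult.commute)
qed

end

section \<open>The p-adic absolute value\<close>

lemma padic_abs_rat_gt_1:
  assumes "1 < p" and "1 < padic_abs_rat p q"
  shows "real p \<le> padic_abs_rat p q"
proof -
  obtain k :: int where k: "padic_abs_rat p q = real p powi k"
    using assms(2) by (cases "quotient_of q") (auto simp: padic_abs_rat_def split: if_splits)
  have "0 < k"
  proof (rule ccontr)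
    assume "\<not> 0 < k"
    then have "real p powi k \<le> real p powi 0" using assms(1) by (intro power_int_increasing) auto
    then show False using k assms(2) by simp
  qed
  then have "real p powi 1 \<le> real p powi k" using assms(1) by (intro power_int_increasing) auto
  with k show ?thesis by simp
qed

lemma is_Qp_nonarch_abs: "is_Qp p v \<Longrightarrow> nonarch_abs v"
  by unfold_locales (simp_all add: is_Qp_def)

text \<open>Density of \<open>\<rat>\<close> lets every value of \<open>v\<close> be realised by a rational number.\<close>

lemma is_Qp_value_gap:
  assumes "is_Qp p v" and "1 < p" and "1 < v x"
  shows "real p \<le> v x"
proof -
  interpret nonarch_abs v using assms(1) by (rule is_Qp_nonarch_abs)
  obtain q where "v (x - of_rat q) < v x"
    using assms(1,3) unfolding is_Qp_def by (meson less_trans zero_less_one)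
  then have "v (of_rat q) = v x" by (rule eq_if_diff_less)
  moreover have "v (of_rat q) = padic_abs_rat p q" using assms(1) unfolding is_Qp_def by blast
  ultimately show ?thesis using padic_abs_rat_gt_1[OF assms(2)] assms(3) by metis
qed

theorem mainTheorem8:
  fixes v :: "'a::field_char_0 \<Rightarrow> real" and p :: nat and t :: real
  assumes "prime p" and "is_Qp p v" and "1 \<le> t" and "t \<le> real p"
  shows "rr' v t (mat 1 :: 'a^'n::finite^'n) = 0
    \<and> (\<forall>A::'a^'n^'n. A \<in> GLn \<and> A \<noteq> mat 1 \<longrightarrow> rr' v t A > 0)
    \<and> (\<forall>A::'a^'n^'n. A \<in> GLn \<longrightarrow> rr' v t (matrix_inv A) = rr' v t A)
    \<and> (\<forall>A B::'a^'n^'n. A \<in> GLn \<and> B \<in> GLn \<longrightarrow>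
          rr' v t (A ** B) \<le> max (rr' v t A) (rr' v t B))
    \<and> ultrametric_on GLn (\<lambda>A B::'a^'n^'n. rr' v t (matrix_inv B ** A))
    \<and> (\<forall>A B C::'a^'n^'n. A \<in> GLn \<and> B \<in> GLn \<and> C \<in> GLn \<longrightarrow>
          rr' v t (matrix_inv (C ** B) ** (C ** A)) = rr' v t (matrix_inv B ** A))
    \<and> (\<forall>U. d_open GLn (\<lambda>A B::'a^'n^'n. rr' v t (matrix_inv B ** A)) U \<longleftrightarrow>
             d_open GLn (\<lambda>A B. mnorm v (A - B)) U)
    \<and> ultrametric_on GLn (\<lambda>A B::'a^'n^'n. rr' v t (A ** matrix_inv B))
    \<and> (\<forall>A B C::'a^'n^'n. A \<in> GLn \<and> B \<in> GLn \<and> C \<in> GLn \<longrightarrow>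
          rr' v t ((A ** C) ** matrix_inv (B ** C)) = rr' v t (A ** matrix_inv B))
    \<and> (\<forall>U. d_open GLn (\<lambda>A B::'a^'n^'n. rr' v t (A ** matrix_inv B)) U \<longleftrightarrow>
             d_open GLn (\<lambda>A B. mnorm v (A - B)) U)
    \<and> (\<forall>A B::'a^'n^'n. A \<in> GLZ v \<and> B \<in> GLZ v \<longrightarrow>
          rr' v t (matrix_inv B ** A) = mnorm v (A - B))"
proof -
  have "1 < p" using assms(1) by (rule prime_gt_1_nat)
  interpret gapped_abs v t
    using is_Qp_nonarch_abs[OF assms(2)] is_Qp_value_gap[OF assms(2) \<open>1 < p\<close>] assms(3,4)
    by (auto simp: gapped_abs_def gapped_abs_axioms_def intro: order_trans)
  have norm: "GL_ultranorm (rr' v t :: 'a^'n^'n \<Rightarrow> real)" by (rule GL_ultranorm_rr')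
  show ?thesis
    using GL_ultranorm.ultrametric_left[OF norm] GL_ultranorm.ultrametric_right[OF norm]
      d_open_left_iff d_open_right_iff rr'_GLZ
    by (auto simp: GLn_def rr'_eq_0_iff rr'_nonneg rr'_matrix_inv rr'_mult_le_max
        matrix_inv_mult_cancel_left matrix_inv_mult_cancel_right order_less_le)
qed

end
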